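(* Let $n\ge 1$, $\lambda\in\mathbb{R}$, $t\ge 0$, and let $E_1,\dots,E_{n+1}$ and $k_1,\dots,k_n$ be complex numbers. Assume that $E_{p(j)}-E_j+i\lambda k(j;G)\neq 0$ for every $G\in\mathcal{G}_n$ and every $1\le j\le n$ (notation as in the context). Then $$\int_{0\le t_n\le\cdots\le t_1\le t} dt_1\cdots dt_n\,\prod_{j=1}^n e^{-it_j(E_{j+1}-E_j+i\lambda k_j)} =\sum_{G\in\mathcal{G}_n}\sigma(G)\left(\prod_{j=1}^n\frac{i}{E_{p(j)}-E_j+i\lambda k(j;G)}\right)\left(e^{-it\,(E_{p(1)}-E_1+i\lambda k(1;G))}-1\right),$$ where $p(j)=p_G(j)$.
   Context: $\mathcal{G}_n$ is the set of directed graphs $G$ on the vertex set $\{1,\dots,n+1\}$ that are in bijection with compositions of $n$ (finite ordered sequences $(c_1,\dots,c_r)$ of positive integers with $c_1+\dots+c_r=n$) as follows. Given a composition with partial sums $s_0=0<s_1<\dots<s_r=n$, every vertex $j$ with $s_{i-1}<j\le s_i$ receives exactly one bond, coming from the vertex $p(j):=s_i+1$; no other bonds are present. Hence $|\mathcal{G}_n|=2^{n-1}$. The sign of $G$ is $\sigma(G)=(-1)^{r-1}$, where $r$ is the number of parts of the composition. Equivalently, the signs are defined inductively: the unique graph in $\mathcal{G}_1$ has sign $+1$; from $G$ one obtains a graph with one more vertex either by adding a new block of size one at the start (sign flips) or by enlarging the first block by one (sign unchanged). For $1\le j\le n$, set $k(j;G)=\sum_{m=j}^{p(j)-1}k_m$.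 *)

theory Defs
  imports "HOL-Analysis.Analysis"
begin

definition compositions :: "nat \<Rightarrow> nat list set" where
  "compositions n = {c. (\<forall>x\<in>set c. 0 < x) \<and> sum_list c = n}"

definition partial_sums :: "nat list \<Rightarrow> nat set" where
  "partial_sums c = {sum_list (take i c) | i. i \<le> length c}"

definition comp_p :: "nat list \<Rightarrow> nat \<Rightarrow> nat" where
  "comp_p c j = (LEAST s. s \<in> partial_sums c \<and> j \<le> s) + 1"

text \<open>The directed graph G on vertices 1..n+1 associated with a composition:
  bonds from p(j) to j for 1 \<le> j \<le> n.\<close>
definition comp_graph :: "nat \<Rightarrow> nat list \<Rightarrow> (nat \<times> nat) set" where
  "comp_graph n c = {(comp_p c j, j) | j. 1 \<le> j \<and> j \<le> n}"

definition comp_sign :: "nat list \<Rightarrow> complex" where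
  "comp_sign c = (-1) ^ (length c - 1)"

definition comp_k :: "(nat \<Rightarrow> complex) \<Rightarrow> nat list \<Rightarrow> nat \<Rightarrow> complex" where
  "comp_k k c j = (\<Sum>m = j..comp_p c j - 1. k m)"

definition ordered_simplex :: "nat \<Rightarrow> real \<Rightarrow> (nat \<Rightarrow> real) set" where
  "ordered_simplex n t = {x \<in> space (PiM {1..n} (\<lambda>_. lborel)).
      0 \<le> x n \<and> (\<forall>j. 1 \<le> j \<and> j < n \<longrightarrow> x (Suc j) \<le> x j) \<and> x 1 \<le> t}"

end

theory Submission
  imports Defs
begin

text \<open>Put a_j = E_(j+1) - E_j + i lambda k_j. Telescoping turns the denominator attached to
  vertex j of G into the block sum a_j + ... + a_(p(j)-1), so the theorem is an identity for
  arbitrary complex a_j. Let F_j(s) be the integral of the product of exp(-i t_m a_m), m >= j, over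
  0 <= t_n <= ... <= t_j <= s. Fubini gives F_j(s) = int_0^s exp(-i u a_j) F_(j+1)(u) du, and the
  formula follows by downward induction on j: multiplying a term of F_(j+1) by exp(-i u a_j) and
  integrating produces two terms, in which vertex j either joins the first block of G (sign kept)
  or forms a new block of size one (sign flipped).\<close>

fun block_end :: "nat list \<Rightarrow> nat \<Rightarrow> nat" where
  "block_end [] m = 0"
| "block_end (b # c) m = (if m \<le> b then b else b + block_end c (m - b))"

lemma block_end_le_sum_list: "block_end c m \<le> sum_list c"
  by (induction c arbitrary: m) auto

lemma block_end_replicate_append:
  "r < m \<Longrightarrow> block_end (replicate r 1 @ d) m = r + block_end d (m - r)"
proof (induction r arbitrary: m)
  case (Suc r)
  then show ?case using Suc.IH[of "m - 1"] by simp
qed simp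

lemma partial_sums_Cons: "partial_sums (b # c) = insert 0 ((+) b ` partial_sums c)"
proof -
  have "{sum_list (take i (b # c)) | i. i \<le> length (b # c)}
      = insert 0 ((+) b ` {sum_list (take i c) | i. i \<le> length c})"
  proof (intro set_eqI iffI)
    fix x assume "x \<in> {sum_list (take i (b # c)) | i. i \<le> length (b # c)}"
    then obtain i where "x = sum_list (take i (b # c))" "i \<le> Suc (length c)" by auto
    then show "x \<in> insert 0 ((+) b ` {sum_list (take i c) | i. i \<le> length c})"
      by (cases i) auto
  next
    fix x assume "x \<in> insert 0 ((+) b ` {sum_list (take i c) | i. i \<le> length c})"
    then consider "x = 0" | i where "x = b + sum_list (take i c)" "i \<le> length c" by auto
    then show "x \<in> {sum_list (take i (b # c)) | i. i \<le> length (b # c)}"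
      by cases (force intro: exI[of _ 0], force intro: exI[of _ "Suc i" for i])
  qed
  then show ?thesis by (simp only: partial_sums_def)
qed

lemma block_end_is_least:
  assumes "\<forall>x\<in>set c. 0 < x" "1 \<le> m" "m \<le> sum_list c"
  shows "block_end c m \<in> partial_sums c \<and> m \<le> block_end c m \<and>
    (\<forall>s\<in>partial_sums c. m \<le> s \<longrightarrow> block_end c m \<le> s)"
  using assms
proof (induction c arbitrary: m)
  case (Cons b c)
  have "0 \<in> partial_sums c" by (force simp: partial_sums_def)
  moreover have "block_end c (m - b) \<in> partial_sums c \<and> m - b \<le> block_end c (m - b) \<and>
      (\<forall>s\<in>partial_sums c. m - b \<le> s \<longrightarrow> block_end c (m - b) \<le> s)" if "\<not> m \<le> b"
    using Cons.prems that by (intro Cons.IH) auto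
  ultimately show ?case
    using Cons.prems by (auto simp: partial_sums_Cons)
qed simp

lemma comp_p_eq_Suc_block_end:
  assumes "c \<in> compositions n" "1 \<le> m" "m \<le> n"
  shows "comp_p c m = Suc (block_end c m)"
proof -
  have "(LEAST s. s \<in> partial_sums c \<and> m \<le> s) = block_end c m"
    using block_end_is_least[of c m] assms
    by (intro Least_equality) (auto simp: compositions_def)
  then show ?thesis by (simp add: comp_p_def)
qed

lemma less_comp_p:
  assumes "c \<in> compositions n" "m \<in> {1..n}"
  shows "m < comp_p c m"
  using block_end_is_least[of c m] comp_p_eq_Suc_block_end[of c n m] assms
  by (simp add: compositions_def)

lemma composition_with_block:
  assumes "1 \<le> m" "m < p" "p \<le> Suc n"
  shows "\<exists>c\<in>compositions n. comp_p c m = p"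
proof
  define c where "c = replicate (m - 1) 1 @ [p - m] @ replicate (Suc n - p) (1::nat)"
  show c: "c \<in> compositions n"
    using assms by (auto simp: c_def compositions_def sum_list_replicate)
  have "block_end c m = (m - 1) + block_end ([p - m] @ replicate (Suc n - p) 1) 1"
    using assms unfolding c_def by (subst block_end_replicate_append) auto
  then have "block_end c m = p - 1"
    using assms by simp
  then show "comp_p c m = p"
    using comp_p_eq_Suc_block_end[OF c, of m] assms by simp
qed

definition inc_head :: "nat list \<Rightarrow> nat list" where
  "inc_head c = (case c of [] \<Rightarrow> [] | b # r \<Rightarrow> Suc b # r)"

lemma compositions_Suc_0: "compositions (Suc 0) = {[1]}"
proof (intro set_eqI iffI)
  fix c assume "c \<in> compositions (Suc 0)"
  then show "c \<in> {[1]}"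
    by (cases c; cases "tl c") (auto simp: compositions_def)
qed (auto simp: compositions_def)

lemma compositions_Suc:
  assumes "1 \<le> n"
  shows "compositions (Suc n) = Cons 1 ` compositions n \<union> inc_head ` compositions n"
proof (intro set_eqI iffI)
  fix c assume c: "c \<in> compositions (Suc n)"
  then obtain b r where cb: "c = b # r" by (cases c) (auto simp: compositions_def)
  show "c \<in> Cons 1 ` compositions n \<union> inc_head ` compositions n"
  proof (cases "b = 1")
    case True
    then show ?thesis using c cb by (auto simp: compositions_def)
  next
    case False
    then have "(b - 1) # r \<in> compositions n" "c = inc_head ((b - 1) # r)"
      using c cb by (auto simp: compositions_def inc_head_def)
    then show ?thesis by blast
  qed
next
  fix c assume "c \<in> Cons 1 ` compositions n \<union> inc_head ` compositions n"
  then show "c \<in> compositions (Suc n)"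
    using assms by (auto simp: compositions_def inc_head_def split: list.splits)
qed

lemma finite_compositions: "finite (compositions n)"
proof (rule finite_subset)
  have "length c \<le> sum_list c" if "\<forall>x\<in>set c. 0 < x" for c :: "nat list"
    using that by (induction c) auto
  then show "compositions n \<subseteq> {c. set c \<subseteq> {..n} \<and> length c \<le> n}"
    by (auto simp: compositions_def member_le_sum_list)
  show "finite {c. set c \<subseteq> {..n} \<and> length c \<le> n}"
    by (rule finite_lists_length_le) simp
qed

lemma inj_on_inc_head: "inj_on inc_head (compositions n)"
  by (auto simp: inj_on_def inc_head_def compositions_def split: list.splits)

lemma Cons_1_inc_head_disjoint:
  "1 \<le> n \<Longrightarrow> Cons 1 ` compositions n \<inter> inc_head ` compositions n = {}"
  by (auto simp: inc_head_def compositions_def split: list.splits)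

text \<open>A composition c of n + 1 - j is read as a graph on the vertices j, ..., n + 1, in which
  vertex m has the parent p = j + block_end c (m + 1 - j) and the denominator sum a {m..<p}.\<close>

definition graph_weight :: "(nat \<Rightarrow> complex) \<Rightarrow> nat \<Rightarrow> nat \<Rightarrow> nat list \<Rightarrow> complex" where
  "graph_weight a j n c = (\<Prod>m=j..n. \<i> / sum a {m..<j + block_end c (Suc m - j)})"

definition graph_sum :: "(nat \<Rightarrow> complex) \<Rightarrow> nat \<Rightarrow> nat \<Rightarrow> real \<Rightarrow> complex" where
  "graph_sum a j n s = (\<Sum>c\<in>compositions (Suc n - j). comp_sign c * graph_weight a j n c *
      (exp (- \<i> * s * sum a {j..<j + block_end c 1}) - 1))"

lemma graph_sum_last: "graph_sum a n n s = \<i> / a n * (exp (- \<i> * s * a n) - 1)"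
  by (simp add: graph_sum_def graph_weight_def compositions_Suc_0 comp_sign_def)

lemma graph_sum_split:
  assumes "j < n"
  shows "graph_sum a j n s = (\<Sum>c\<in>compositions (n - j). comp_sign c * graph_weight a (Suc j) n c *
     (\<i> / sum a {j..<Suc j + block_end c 1} * (exp (- \<i> * s * sum a {j..<Suc j + block_end c 1}) - 1)
      - \<i> / a j * (exp (- \<i> * s * a j) - 1)))"
    (is "_ = (\<Sum>c\<in>_. ?U c)")
proof -
  have n1: "1 \<le> n - j" and jn: "j \<le> n" using assms by simp_all
  define T where "T c = comp_sign c * graph_weight a j n c *
      (exp (- \<i> * s * sum a {j..<j + block_end c 1}) - 1)" for c
  have "graph_sum a j n s = sum T (Cons 1 ` compositions (n - j) \<union> inc_head ` compositions (n - j))"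
    using assms by (simp add: graph_sum_def T_def Suc_diff_le compositions_Suc[OF n1])
  also have "\<dots> = sum T (Cons 1 ` compositions (n - j)) + sum T (inc_head ` compositions (n - j))"
    by (intro sum.union_disjoint finite_imageI finite_compositions Cons_1_inc_head_disjoint[OF n1])
  also have "\<dots> = (\<Sum>c\<in>compositions (n - j). T (1 # c) + T (inc_head c))"
    by (simp add: sum.reindex inj_on_inc_head sum.distrib)
  also have "\<dots> = (\<Sum>c\<in>compositions (n - j). ?U c)"
  proof (rule sum.cong[OF refl])
    fix c assume "c \<in> compositions (n - j)"
    then obtain b r where c: "c = b # r" "1 \<le> b" using n1
      by (cases c) (auto simp: compositions_def)
    have "graph_weight a j n (1 # c) = \<i> / a j * graph_weight a (Suc j) n c"
      unfolding graph_weight_def prod.atLeast_Suc_atMost[OF jn]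
      by (auto intro!: prod.cong simp: Suc_diff_le)
    moreover have "graph_weight a j n (inc_head c) =
        \<i> / sum a {j..<Suc j + block_end c 1} * graph_weight a (Suc j) n c"
      unfolding graph_weight_def prod.atLeast_Suc_atMost[OF jn]
      using c by (auto intro!: prod.cong simp: Suc_diff_le inc_head_def)
    moreover have "comp_sign (1 # c) = - comp_sign c" "comp_sign (inc_head c) = comp_sign c"
      using c by (simp_all add: comp_sign_def inc_head_def)
    moreover have "j + block_end (inc_head c) 1 = Suc j + block_end c 1"
      using c by (simp add: inc_head_def)
    ultimately show "T (1 # c) + T (inc_head c) = ?U c"
      by (simp add: T_def divide_inverse algebra_simps)
  qed
  finally show ?thesis .
qed

lemma graph_sum_1:
  assumes "1 \<le> n"
  shows "graph_sum a 1 n s = (\<Sum>c\<in>compositions n. comp_sign c *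
      (\<Prod>m=1..n. \<i> / sum a {m..<comp_p c m}) * (exp (- \<i> * s * sum a {1..<comp_p c 1}) - 1))"
  unfolding graph_sum_def graph_weight_def
  using assms by (intro sum.cong prod.cong) (auto simp: comp_p_eq_Suc_block_end)


lemma set_integral_sum:
  fixes f :: "'i \<Rightarrow> 'a \<Rightarrow> 'b::{banach, second_countable_topology}"
  assumes "\<And>i. i \<in> I \<Longrightarrow> set_integrable M A (f i)"
  shows "(LINT x:A|M. (\<Sum>i\<in>I. f i x)) = (\<Sum>i\<in>I. LINT x:A|M. f i x)"
  using assms unfolding set_lebesgue_integral_def set_integrable_def
  by (simp add: scaleR_sum_right integral_sum)

lemma set_integrable_exp_interval:
  "set_integrable lborel {0..s} (\<lambda>u::real. exp (- \<i> * u * X))"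
  unfolding set_integrable_def by (intro borel_integrable_compact continuous_intros) auto

lemma set_integral_exp_interval:
  fixes X :: complex and s :: real
  assumes "X \<noteq> 0" "0 \<le> s"
  shows "(LINT u:{0..s}|lborel. exp (- \<i> * u * X)) = \<i> / X * (exp (- \<i> * s * X) - 1)"
proof -
  have deriv: "((\<lambda>z. \<i> / X * exp (- \<i> * z * X)) has_field_derivative exp (- \<i> * z * X)) (at z)"
    for z
    using assms(1) by (auto intro!: derivative_eq_intros)
  have "(LINT u:{0..s}|lborel. exp (- \<i> * u * X))
      = \<i> / X * exp (- \<i> * of_real s * X) - \<i> / X * exp (- \<i> * of_real 0 * X)"
    unfolding set_lebesgue_integral_def
  proof (rule integral_FTC_atLeastAtMost[OF assms(2)])
    show "((\<lambda>u. \<i> / X * exp (- \<i> * of_real u * X)) has_vector_derivative exp (- \<i> * x * X))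
        (at x within {0..s})" for x
      by (rule has_vector_derivative_at_within, rule has_vector_derivative_real_field, rule deriv)
  qed (intro continuous_intros)
  then show ?thesis by (simp add: algebra_simps)
qed

abbreviation PM :: "nat set \<Rightarrow> (nat \<Rightarrow> real) measure" where
  "PM I \<equiv> PiM I (\<lambda>_. lborel)"

interpretation lborel_product: product_sigma_finite "\<lambda>_::nat. lborel :: real measure"
  by standard

definition chain_simplex :: "nat \<Rightarrow> nat \<Rightarrow> real \<Rightarrow> (nat \<Rightarrow> real) set" where
  "chain_simplex j n s = {x \<in> space (PM {j..n}).
     (\<forall>m\<in>{j..n}. 0 \<le> x m \<and> x m \<le> s) \<and> (\<forall>m\<in>{j..<n}. x (Suc m) \<le> x m)}"

definition simplex_exp_integral :: "(nat \<Rightarrow> complex) \<Rightarrow> nat \<Rightarrow> nat \<Rightarrow> real \<Rightarrow> complex" where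
  "simplex_exp_integral a j n s =
     (LINT x : chain_simplex j n s | PM {j..n}. (\<Prod>m=j..n. exp (- \<i> * x m * a m)))"

lemma sets_chain_simplex: "chain_simplex j n s \<in> sets (PM {j..n})"
proof -
  have [measurable]: "Measurable.pred (PM {j..n}) (\<lambda>x. x (Suc m) \<le> x m)" if "m \<in> {j..<n}" for m
    using that unfolding pred_def
    by (intro borel_measurable_le measurable_component_singleton) auto
  show ?thesis
    unfolding chain_simplex_def by measurable
qed

lemma fun_upd_in_chain_simplex_iff:
  assumes "j \<le> n" "y \<in> space (PM {Suc j..n})"
  shows "y(j := u) \<in> chain_simplex j n s \<longleftrightarrow> u \<in> {0..s} \<and> y \<in> chain_simplex (Suc j) n u"
proof
  assume "y(j := u) \<in> chain_simplex j n s"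
  then have bounds: "\<And>m. m \<in> {j..n} \<Longrightarrow> 0 \<le> (y(j := u)) m \<and> (y(j := u)) m \<le> s"
    and chain: "\<And>m. m \<in> {j..<n} \<Longrightarrow> (y(j := u)) (Suc m) \<le> (y(j := u)) m"
    by (auto simp: chain_simplex_def)
  have u: "u \<in> {0..s}" using bounds[of j] assms(1) by simp
  have chain_y: "y (Suc m) \<le> y m" if "m \<in> {Suc j..<n}" for m
    using chain[of m] that by simp
  have nonneg: "0 \<le> y m" if "m \<in> {Suc j..n}" for m
    using bounds[of m] that by simp
  have "y m \<le> u" if "m \<in> {Suc j..n}" for m
  proof -
    have "y m \<le> y (Suc j)"
      by (rule lift_Suc_antimono_le_ivl[of "{Suc j..<n}" y]) (use chain_y that in auto)
    also have "y (Suc j) \<le> u"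
      using chain[of j] that by simp
    finally show ?thesis .
  qed
  then show "u \<in> {0..s} \<and> y \<in> chain_simplex (Suc j) n u"
    using u nonneg chain_y assms(2) by (auto simp: chain_simplex_def)
next
  assume "u \<in> {0..s} \<and> y \<in> chain_simplex (Suc j) n u"
  then have u: "0 \<le> u" "u \<le> s"
    and bounds: "\<And>m. m \<in> {Suc j..n} \<Longrightarrow> 0 \<le> y m \<and> y m \<le> u"
    and chain: "\<And>m. m \<in> {Suc j..<n} \<Longrightarrow> y (Suc m) \<le> y m"
    by (auto simp: chain_simplex_def)
  have "y(j := u) \<in> space (PM {j..n})"
    using assms by (auto simp: space_PiM PiE_iff extensional_def)
  moreover have "0 \<le> (y(j := u)) m \<and> (y(j := u)) m \<le> s" if "m \<in> {j..n}" for m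
    using u bounds[of m] that by (cases "m = j") auto
  moreover have "(y(j := u)) (Suc m) \<le> (y(j := u)) m" if "m \<in> {j..<n}" for m
    using bounds[of "Suc m"] chain[of m] that by (cases "m = j") auto
  ultimately show "y(j := u) \<in> chain_simplex j n s"
    by (simp add: chain_simplex_def)
qed

lemma norm_exp_mult_le:
  fixes x s :: real and z :: complex
  assumes "0 \<le> x" "x \<le> s"
  shows "norm (exp (- \<i> * x * z)) \<le> exp (s * norm z)"
proof -
  have "x * Im z \<le> x * norm z"
    using assms(1) abs_Im_le_cmod[of z] by (intro mult_left_mono) auto
  also have "\<dots> \<le> s * norm z"
    using assms by (intro mult_right_mono) auto
  finally show ?thesis by (simp add: norm_exp_eq_Re)
qed

lemma emeasure_chain_simplex_finite: "emeasure (PM {j..n}) (chain_simplex j n s) < \<infinity>"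
proof -
  have "emeasure (PM {j..n}) (chain_simplex j n s) \<le> emeasure (PM {j..n}) (PiE {j..n} (\<lambda>_. {0..s}))"
    by (rule emeasure_mono) (auto simp: chain_simplex_def space_PiM intro!: sets_PiM_I_finite)
  also have "\<dots> = (\<Prod>i\<in>{j..n}. emeasure lborel {0..s})"
    by (rule lborel_product.emeasure_PiM) auto
  also have "\<dots> < \<infinity>"
    by (simp add: emeasure_lborel_Icc_eq power_less_top_ennreal)
  finally show ?thesis .
qed

lemma set_integrable_simplex_exp:
  "set_integrable (PM {j..n}) (chain_simplex j n s) (\<lambda>x. \<Prod>m=j..n. exp (- \<i> * x m * a m))"
  unfolding set_integrable_def
proof (rule integrableI_bounded_set[where A = "chain_simplex j n s" and B = "\<Prod>m=j..n. exp (s * norm (a m))"])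
  show "(\<lambda>x. indicator (chain_simplex j n s) x *\<^sub>R (\<Prod>m=j..n. exp (- \<i> * x m * a m)))
      \<in> borel_measurable (PM {j..n})"
    using sets_chain_simplex by measurable
  show "AE x in PM {j..n}. x \<in> chain_simplex j n s \<longrightarrow>
      norm (indicator (chain_simplex j n s) x *\<^sub>R (\<Prod>m=j..n. exp (- \<i> * x m * a m)))
        \<le> (\<Prod>m=j..n. exp (s * norm (a m)))"
  proof (intro AE_I2 impI)
    fix x assume x: "x \<in> chain_simplex j n s"
    have "norm (\<Prod>m=j..n. exp (- \<i> * x m * a m)) = (\<Prod>m=j..n. norm (exp (- \<i> * x m * a m)))"
      by (rule prod_norm[symmetric])
    also have "\<dots> \<le> (\<Prod>m=j..n. exp (s * norm (a m)))"
      using x by (intro prod_mono conjI norm_ge_zero norm_exp_mult_le) (auto simp: chain_simplex_def)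
    finally show "norm (indicator (chain_simplex j n s) x *\<^sub>R (\<Prod>m=j..n. exp (- \<i> * x m * a m)))
        \<le> (\<Prod>m=j..n. exp (s * norm (a m)))"
      using x by simp
  qed
  show "emeasure (PM {j..n}) (chain_simplex j n s) < \<infinity>"
    by (rule emeasure_chain_simplex_finite)
qed (simp_all add: sets_chain_simplex)

lemma simplex_exp_integral_Suc_self: "simplex_exp_integral a (Suc n) n s = 1"
  by (simp add: simplex_exp_integral_def chain_simplex_def set_lebesgue_integral_def PiM_empty
      lebesgue_integral_count_space_finite)

lemma merge_singleton_eq_fun_upd:
  assumes "y \<in> space (PiM J M)" "j \<notin> J"
  shows "merge {j} J (x, y) = y(j := x j)"
  using assms by (auto simp: merge_def space_PiM PiE_iff extensional_def fun_eq_iff)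

lemma simplex_exp_integral_slice:
  assumes "j \<le> n"
  shows "(\<integral>y. indicator (chain_simplex j n s) (y(j := u)) *\<^sub>R
        (\<Prod>m=j..n. exp (- \<i> * (y(j := u)) m * a m)) \<partial>PM {Suc j..n})
    = indicator {0..s} u *\<^sub>R (exp (- \<i> * u * a j) * simplex_exp_integral a (Suc j) n u)"
proof -
  have "indicator (chain_simplex j n s) (y(j := u)) *\<^sub>R (\<Prod>m=j..n. exp (- \<i> * (y(j := u)) m * a m))
      = indicator {0..s} u *\<^sub>R (exp (- \<i> * u * a j) *
        (indicator (chain_simplex (Suc j) n u) y *\<^sub>R (\<Prod>m=Suc j..n. exp (- \<i> * y m * a m))))"
    if "y \<in> space (PM {Suc j..n})" for y
  proof -
    have "(\<Prod>m=j..n. exp (- \<i> * (y(j := u)) m * a m))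
        = exp (- \<i> * u * a j) * (\<Prod>m=Suc j..n. exp (- \<i> * y m * a m))"
      unfolding prod.atLeast_Suc_atMost[OF assms] by (auto intro!: prod.cong)
    then show ?thesis
      using fun_upd_in_chain_simplex_iff[OF assms that] by (simp add: indicator_def)
  qed
  then have "(\<integral>y. indicator (chain_simplex j n s) (y(j := u)) *\<^sub>R
        (\<Prod>m=j..n. exp (- \<i> * (y(j := u)) m * a m)) \<partial>PM {Suc j..n})
    = (\<integral>y. indicator {0..s} u *\<^sub>R (exp (- \<i> * u * a j) *
        (indicator (chain_simplex (Suc j) n u) y *\<^sub>R (\<Prod>m=Suc j..n. exp (- \<i> * y m * a m))))
      \<partial>PM {Suc j..n})"
    by (intro Bochner_Integration.integral_cong) auto
  also have "\<dots> = indicator {0..s} u *\<^sub>R (exp (- \<i> * u * a j) * simplex_exp_integral a (Suc j) n u)"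
    by (simp only: integral_scaleR_right integral_mult_right_zero simplex_exp_integral_def
        set_lebesgue_integral_def)
  finally show ?thesis .
qed

text \<open>The function \<phi> stands in for u \<mapsto> simplex_exp_integral a (Suc j) n u, whose
  measurability in u would need a separate argument.\<close>

lemma simplex_exp_integral_recursion:
  fixes \<phi> :: "real \<Rightarrow> complex"
  assumes "j \<le> n" "\<phi> \<in> borel_measurable lborel"
    and "\<And>u. u \<in> {0..s} \<Longrightarrow> simplex_exp_integral a (Suc j) n u = \<phi> u"
  shows "simplex_exp_integral a j n s = (LINT u:{0..s}|lborel. exp (- \<i> * u * a j) * \<phi> u)"
proof -
  define J where "J = {Suc j..n}"
  define g where "g x = indicator (chain_simplex j n s) x *\<^sub>R (\<Prod>m=j..n. exp (- \<i> * x m * a m))"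
    for x
  define h where "h u = indicator {0..s} u *\<^sub>R (exp (- \<i> * u * a j) * \<phi> u)" for u
  have jJ: "{j..n} = {j} \<union> J" "j \<notin> J"
    using assms(1) by (auto simp: J_def)
  have inner: "(\<integral>y. g (merge {j} J (x, y)) \<partial>PM J) = h (x j)" for x
  proof -
    have "(\<integral>y. g (merge {j} J (x, y)) \<partial>PM J) = (\<integral>y. g (y(j := x j)) \<partial>PM J)"
      by (intro Bochner_Integration.integral_cong refl) (simp add: merge_singleton_eq_fun_upd jJ(2))
    also have "\<dots> = indicator {0..s} (x j) *\<^sub>R
        (exp (- \<i> * x j * a j) * simplex_exp_integral a (Suc j) n (x j))"
      unfolding g_def J_def by (rule simplex_exp_integral_slice[OF assms(1)])
    also have "\<dots> = h (x j)"
      using assms(3)[of "x j"] by (auto simp: h_def indicator_def)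
    finally show ?thesis .
  qed
  have "simplex_exp_integral a j n s = integral\<^sup>L (PM ({j} \<union> J)) g"
    unfolding jJ(1)[symmetric]
    by (simp add: simplex_exp_integral_def set_lebesgue_integral_def g_def[abs_def])
  also have "\<dots> = (\<integral>x. (\<integral>y. g (merge {j} J (x, y)) \<partial>PM J) \<partial>PM {j})"
  proof (rule lborel_product.product_integral_fold)
    show "integrable (PM ({j} \<union> J)) g"
      using set_integrable_simplex_exp[of j n s a]
      unfolding jJ(1)[symmetric] set_integrable_def g_def[abs_def] .
  qed (auto simp: J_def)
  also have "\<dots> = (\<integral>x. h (x j) \<partial>PM {j})"
    by (simp only: inner)
  also have "\<dots> = integral\<^sup>L lborel h"
    using assms(2) by (intro lborel_product.product_integral_singleton) (simp add: h_def)
  also have "\<dots> = (LINT u:{0..s}|lborel. exp (- \<i> * u * a j) * \<phi> u)"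
    by (simp add: set_lebesgue_integral_def h_def[abs_def])
  finally show ?thesis .
qed

lemma simplex_exp_integral_eq_graph_sum:
  fixes a :: "nat \<Rightarrow> complex" and s :: real
  assumes "j \<le> n" "0 \<le> s"
    and nz: "\<And>m p. j \<le> m \<Longrightarrow> m < p \<Longrightarrow> p \<le> Suc n \<Longrightarrow> sum a {m..<p} \<noteq> 0"
  shows "simplex_exp_integral a j n s = graph_sum a j n s"
  using assms(1,2)
proof (induction j arbitrary: s rule: inc_induct)
  case base
  have "simplex_exp_integral a n n s = (LINT u:{0..s}|lborel. exp (- \<i> * u * a n) * 1)"
    by (rule simplex_exp_integral_recursion) (simp_all add: simplex_exp_integral_Suc_self)
  also have "\<dots> = graph_sum a n n s"
    using set_integral_exp_interval[of "a n" s] nz[of n "Suc n"] base assms(1)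
    by (simp add: graph_sum_last)
  finally show ?case .
next
  case (step i)
  define K where "K c = comp_sign c * graph_weight a (Suc i) n c" for c
  define X where "X c = sum a {i..<Suc i + block_end c 1}" for c
  have X_nz: "X c \<noteq> 0" if "c \<in> compositions (n - i)" for c
    unfolding X_def
    by (rule nz)
      (use that block_end_le_sum_list[of c 1] step.hyps in \<open>auto simp: compositions_def\<close>)
  have a_nz: "a i \<noteq> 0"
    using nz[of i "Suc i"] step.hyps by simp
  have integrand: "exp (- \<i> * u * a i) * graph_sum a (Suc i) n u
      = (\<Sum>c\<in>compositions (n - i). K c * (exp (- \<i> * u * X c) - exp (- \<i> * u * a i)))"
    for u :: real
  proof -
    have "X c = a i + sum a {Suc i..<Suc i + block_end c 1}" for c
      by (simp add: X_def sum.atLeast_Suc_lessThan)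
    then have "exp (- \<i> * u * X c)
        = exp (- \<i> * u * a i) * exp (- \<i> * u * sum a {Suc i..<Suc i + block_end c 1})" for c
      by (simp add: distrib_left exp_add[symmetric])
    then show ?thesis
      by (simp add: graph_sum_def K_def sum_distrib_left algebra_simps)
  qed
  have "simplex_exp_integral a i n s
      = (LINT u:{0..s}|lborel. exp (- \<i> * u * a i) * graph_sum a (Suc i) n u)"
  proof (rule simplex_exp_integral_recursion)
    show "graph_sum a (Suc i) n \<in> borel_measurable lborel"
      unfolding graph_sum_def by measurable
  qed (use step in auto)
  also have "\<dots> = (LINT u:{0..s}|lborel.
      (\<Sum>c\<in>compositions (n - i). K c * (exp (- \<i> * u * X c) - exp (- \<i> * u * a i))))"
    by (simp only: integrand)
  also have "\<dots> = (\<Sum>c\<in>compositions (n - i). K c *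
      ((LINT u:{0..s}|lborel. exp (- \<i> * u * X c)) - (LINT u:{0..s}|lborel. exp (- \<i> * u * a i))))"
    by (simp only: set_integral_sum set_integral_mult_right set_integral_diff
        set_integrable_mult_right set_integrable_exp_interval)
  also have "\<dots> = (\<Sum>c\<in>compositions (n - i).
      K c * (\<i> / X c * (exp (- \<i> * s * X c) - 1) - \<i> / a i * (exp (- \<i> * s * a i) - 1)))"
  proof (rule sum.cong[OF refl])
    fix c assume c: "c \<in> compositions (n - i)"
    then show "K c * ((LINT u:{0..s}|lborel. exp (- \<i> * u * X c))
          - (LINT u:{0..s}|lborel. exp (- \<i> * u * a i)))
        = K c * (\<i> / X c * (exp (- \<i> * s * X c) - 1) - \<i> / a i * (exp (- \<i> * s * a i) - 1))"
      by (simp only: set_integral_exp_interval[OF X_nz[OF c] step.prems]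
          set_integral_exp_interval[OF a_nz step.prems])
  qed
  also have "\<dots> = graph_sum a i n s"
    using step.hyps by (simp add: graph_sum_split K_def X_def)
  finally show ?case .
qed

lemma ordered_simplex_eq_chain_simplex:
  assumes "1 \<le> n"
  shows "ordered_simplex n t = chain_simplex 1 n t"
proof (intro set_eqI iffI)
  fix x assume x: "x \<in> ordered_simplex n t"
  then have chain: "\<And>m. m \<in> {1..<n} \<Longrightarrow> x (Suc m) \<le> x m"
    by (auto simp: ordered_simplex_def)
  have "0 \<le> x m \<and> x m \<le> t" if "m \<in> {1..n}" for m
  proof
    have "x n \<le> x m"
      by (rule lift_Suc_antimono_le_ivl[of "{1..<n}" x]) (use chain that in auto)
    then show "0 \<le> x m" using x by (simp add: ordered_simplex_def)
    have "x m \<le> x 1"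
      by (rule lift_Suc_antimono_le_ivl[of "{1..<n}" x]) (use chain that in auto)
    then show "x m \<le> t" using x by (simp add: ordered_simplex_def)
  qed
  then show "x \<in> chain_simplex 1 n t"
    using x chain by (simp add: chain_simplex_def ordered_simplex_def)
next
  fix x assume "x \<in> chain_simplex 1 n t"
  then show "x \<in> ordered_simplex n t"
    using assms by (auto simp: chain_simplex_def ordered_simplex_def)
qed

theorem ordered_simplex_exp_integral:
  fixes a :: "nat \<Rightarrow> complex" and t :: real
  assumes "1 \<le> n" "0 \<le> t"
    and "\<And>m p. 1 \<le> m \<Longrightarrow> m < p \<Longrightarrow> p \<le> Suc n \<Longrightarrow> sum a {m..<p} \<noteq> 0"
  shows "(LINT x : ordered_simplex n t | PM {1..n}. (\<Prod>j=1..n. exp (- \<i> * x j * a j)))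
    = (\<Sum>c\<in>compositions n. comp_sign c *
        (\<Prod>j=1..n. \<i> / sum a {j..<comp_p c j}) * (exp (- \<i> * t * sum a {1..<comp_p c 1}) - 1))"
proof -
  have "(LINT x : ordered_simplex n t | PM {1..n}. (\<Prod>j=1..n. exp (- \<i> * x j * a j)))
      = simplex_exp_integral a 1 n t"
    by (simp only: ordered_simplex_eq_chain_simplex[OF assms(1)] simplex_exp_integral_def)
  also have "\<dots> = graph_sum a 1 n t"
    by (rule simplex_exp_integral_eq_graph_sum) (use assms in auto)
  finally show ?thesis
    by (simp only: graph_sum_1[OF assms(1)])
qed

lemma sum_telescope_comp_k:
  fixes E k :: "nat \<Rightarrow> complex"
  assumes "c \<in> compositions n" "j \<in> {1..n}"
  shows "(\<Sum>l=j..<comp_p c j. E (Suc l) - E l + z * k l) = E (comp_p c j) - E j + z * comp_k k c j"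
proof -
  have jp: "j < comp_p c j"
    using assms by (rule less_comp_p)
  have "(\<Sum>l=j..<comp_p c j. E (Suc l) - E l + z * k l)
      = (\<Sum>l=j..<comp_p c j. E (Suc l) - E l) + z * (\<Sum>l=j..<comp_p c j. k l)"
    by (simp add: sum.distrib sum_distrib_left)
  also have "(\<Sum>l=j..<comp_p c j. k l) = comp_k k c j"
    unfolding comp_k_def using jp by (intro sum.cong) auto
  finally show ?thesis
    using jp by (simp add: sum_Suc_diff')
qed

theorem mainTheorem1:
  fixes n :: nat and lam t :: real and E k :: "nat \<Rightarrow> complex"
  assumes "n \<ge> 1" and "t \<ge> 0"
    and "\<forall>c\<in>compositions n. \<forall>j\<in>{1..n}.
           E (comp_p c j) - E j + \<i> * of_real lam * comp_k k c j \<noteq> 0"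
  shows "(LINT x : ordered_simplex n t | PiM {1..n} (\<lambda>_. lborel).
            (\<Prod>j=1..n. exp (- \<i> * of_real (x j) * (E (j+1) - E j + \<i> * of_real lam * k j))))
       = (\<Sum>c\<in>compositions n. comp_sign c *
            (\<Prod>j=1..n. \<i> / (E (comp_p c j) - E j + \<i> * of_real lam * comp_k k c j)) *
            (exp (- \<i> * of_real t * (E (comp_p c 1) - E 1 + \<i> * of_real lam * comp_k k c 1)) - 1))"
proof -
  let ?a = "\<lambda>j. E (j + 1) - E j + \<i> * of_real lam * k j"
  have nz: "sum ?a {m..<p} \<noteq> 0" if mp: "1 \<le> m" "m < p" "p \<le> Suc n" for m p
  proof -
    obtain c where c: "c \<in> compositions n" "comp_p c m = p"
      using composition_with_block[OF mp] by blast
    then show ?thesis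
      using sum_telescope_comp_k[OF c(1), of m] assms(3) mp by auto
  qed
  have "(\<Sum>c\<in>compositions n. comp_sign c *
        (\<Prod>j=1..n. \<i> / sum ?a {j..<comp_p c j}) * (exp (- \<i> * t * sum ?a {1..<comp_p c 1}) - 1))
    = (\<Sum>c\<in>compositions n. comp_sign c *
        (\<Prod>j=1..n. \<i> / (E (comp_p c j) - E j + \<i> * of_real lam * comp_k k c j)) *
        (exp (- \<i> * of_real t * (E (comp_p c 1) - E 1 + \<i> * of_real lam * comp_k k c 1)) - 1))"
    using assms(1) by (intro sum.cong refl) (auto simp: sum_telescope_comp_k intro!: prod.cong)
  with ordered_simplex_exp_integral[of n t ?a, OF assms(1,2) nz] show ?thesis
    by simp
qed

end
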